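(* Let $\mathcal{M}$ be the set of compactly supported probability distributions on $\mathbb{R}$ (identified with their cdfs). A mapping $T:\mathcal{M}\to\mathcal{M}$ satisfies $T\circ T^u=T^u\circ T$ for every utility function $u$ if and only if $T=T_d$ for some distortion function $d$.
   Context: Increasing means non-decreasing. A distortion function is an increasing function $d:[0,1]\to[0,1]$ with $d(0)=0$ and $d(1)=1$ (not necessarily continuous). A utility function is an increasing continuous function $u:\mathbb{R}\to\mathbb{R}$. For a distortion function $d$, the probability distortion $T_d:\mathcal{M}\to\mathcal{M}$ is defined by $T_d(F)(x)=\lim_{y\downarrow x} d(F(y))$ for $x\in\mathbb{R}$. For a utility function $u$, the utility transform $T^u:\mathcal{M}\to\mathcal{M}$ maps the distribution of a random variable $X$ to the distribution of $u(X)$, i.e. $T^u(F)=F\circ u^{-1}$ with $F$ viewed as a measure. *)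

theory Defs
  imports "HOL-Probability.Probability"
begin

definition cdfM :: "(real \<Rightarrow> real) set" where
  "cdfM = {F. mono F \<and> (\<forall>x. continuous (at_right x) F)
      \<and> (F \<longlongrightarrow> 0) at_bot \<and> (F \<longlongrightarrow> 1) at_top
      \<and> (\<exists>a b. \<forall>x. (x < a \<longrightarrow> F x = 0) \<and> (b \<le> x \<longrightarrow> F x = 1))}"

definition distortion :: "(real \<Rightarrow> real) \<Rightarrow> bool" where
  "distortion d \<longleftrightarrow> mono_on {0..1} d \<and> d ` {0..1} \<subseteq> {0..1} \<and> d 0 = 0 \<and> d 1 = 1"

definition utility :: "(real \<Rightarrow> real) \<Rightarrow> bool" where
  "utility u \<longleftrightarrow> mono u \<and> continuous_on UNIV u"

definition prob_distortion :: "(real \<Rightarrow> real) \<Rightarrow> (real \<Rightarrow> real) \<Rightarrow> (real \<Rightarrow> real)" where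
  "prob_distortion d F = (\<lambda>x. Lim (at_right x) (\<lambda>y. d (F y)))"

definition utility_transform :: "(real \<Rightarrow> real) \<Rightarrow> (real \<Rightarrow> real) \<Rightarrow> (real \<Rightarrow> real)" where
  "utility_transform u F = cdf (distr (interval_measure F) borel u)"

end

theory Submission
  imports Defs
begin

(*
  If T = T_d, then T commutes with every T^u: for a utility u, T^u F (t) = F c for the largest
  c with u c <= t (with the conventions 0 and 1 when there is no such c, resp. u <= t
  everywhere), and this reparametrisation commutes with composing by d (because d 0 = 0 and
  d 1 = 1) as well as with taking right limits.

  Conversely, let d p = T (G p) 0, where G p is the law with mass p at 0 and 1 - p at 1.
  Given F and y, the cdf K = F o collapse y is F with a flat piece of length 1 inserted at y.
  Collapsing the flat piece recovers F from K, and the utility s |-> s - y clamped to [0, 1]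
  turns K into G (F y). Commutation with these two utility transforms gives
  T F x = T K x for x < y, T F y = T K (y + 1) and d (F y) = T K y, hence
  T F x <= d (F y) <= T F y for x < y; right-continuity of T F then forces T F = T_d F.
*)

lemma cdfM_I:
  assumes "mono F" "\<And>x. continuous (at_right x) F"
    and "\<And>x. x < a \<Longrightarrow> F x = 0" "\<And>x. b \<le> x \<Longrightarrow> F x = 1"
  shows "F \<in> cdfM"
proof -
  have "(F \<longlongrightarrow> 0) at_bot"
    by (rule tendsto_eventually) (auto simp: eventually_at_bot_dense intro!: exI[of _ a] assms(3))
  moreover have "(F \<longlongrightarrow> 1) at_top"
    by (rule tendsto_eventually) (auto simp: eventually_at_top_linorder intro!: exI[of _ b] assms(4))
  ultimately show ?thesis
    using assms unfolding cdfM_def by blast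
qed

lemma cdfM_mono: "F \<in> cdfM \<Longrightarrow> mono F"
  and cdfM_right_continuous: "F \<in> cdfM \<Longrightarrow> continuous (at_right x) F"
  and cdfM_at_bot: "F \<in> cdfM \<Longrightarrow> (F \<longlongrightarrow> 0) at_bot"
  and cdfM_at_top: "F \<in> cdfM \<Longrightarrow> (F \<longlongrightarrow> 1) at_top"
  unfolding cdfM_def by auto

lemma cdfM_support:
  assumes "F \<in> cdfM"
  obtains a b where "\<And>x. x < a \<Longrightarrow> F x = 0" "\<And>x. b \<le> x \<Longrightarrow> F x = 1"
proof -
  from assms obtain a b where "\<forall>x. (x < a \<longrightarrow> F x = 0) \<and> (b \<le> x \<longrightarrow> F x = 1)"
    unfolding cdfM_def by blast
  then show thesis
    using that by blast
qed

lemma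
  assumes F: "F \<in> cdfM"
  shows cdfM_nonneg: "0 \<le> F x" and cdfM_le_1: "F x \<le> 1"
proof -
  obtain a b where ab: "\<And>x. x < a \<Longrightarrow> F x = 0" "\<And>x. b \<le> x \<Longrightarrow> F x = 1"
    using cdfM_support[OF F] by blast
  have "F (min x (a - 1)) \<le> F x" "F x \<le> F (max x b)"
    using cdfM_mono[OF F] by (simp_all add: monoD)
  then show "0 \<le> F x" "F x \<le> 1"
    using ab by simp_all
qed

lemma continuous_at_right_comp_mono:
  fixes g :: "real \<Rightarrow> real"
  assumes "mono g" "isCont g x" "continuous (at_right (g x)) F"
  shows "continuous (at_right x) (F \<circ> g)"
proof (rule continuous_within_compose)
  show "continuous (at_right x) g"
    using assms(2) by (rule continuous_at_imp_continuous_within)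
  have "g ` {x<..} \<subseteq> {g x..}"
    using assms(1) by (auto simp: monoD)
  moreover have "continuous (at (g x) within {g x..}) F"
    using assms(3) by (simp add: at_within_Ici_at_right)
  ultimately show "continuous (at (g x) within g ` {x<..}) F"
    by (blast intro: continuous_within_subset)
qed

lemma continuous_at_right_if_less:
  fixes x c :: real
  assumes "continuous (at_right x) f" "continuous (at_right x) g"
  shows "continuous (at_right x) (\<lambda>s. if s < c then f s else g s)"
proof (cases "x < c")
  case True
  have "\<forall>\<^sub>F s in at_right x. f s = (if s < c then f s else g s)"
    using True by (auto simp: eventually_at_right_field intro!: exI[of _ c])
  then show ?thesis
    using assms(1) True unfolding continuous_within by (auto elim: tendsto_cong[THEN iffD1])
next
  case False
  have "\<forall>\<^sub>F s in at_right x. g s = (if s < c then f s else g s)"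
    using False by (auto simp: eventually_at_right_field intro!: exI[of _ "x + 1"])
  then show ?thesis
    using assms(2) False unfolding continuous_within by (auto elim: tendsto_cong[THEN iffD1])
qed

definition right_limit :: "(real \<Rightarrow> real) \<Rightarrow> real \<Rightarrow> real" where
  "right_limit H x = Inf (H ` {x<..})"

lemma right_limit_le:
  assumes "bdd_below (range H)" "x < y"
  shows "right_limit H x \<le> H y"
proof -
  have "bdd_below (H ` {x<..})"
    using assms(1) by (rule bdd_below_mono) auto
  then show ?thesis
    unfolding right_limit_def using assms(2) by (auto intro: cInf_lower)
qed

lemma right_limit_greatest: "(\<And>y. x < y \<Longrightarrow> m \<le> H y) \<Longrightarrow> m \<le> right_limit H x"
  unfolding right_limit_def by (auto intro: cInf_greatest)

lemma bdd_below_range_right_limit: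
  assumes "bdd_below (range H)"
  shows "bdd_below (range (right_limit H))"
proof -
  obtain m where "\<And>y. m \<le> H y"
    using assms by (auto simp: bdd_below_def)
  then show ?thesis
    by (auto intro!: bdd_belowI2 right_limit_greatest)
qed

lemma tendsto_right_limit:
  assumes "mono H" "bdd_below (range H)"
  shows "(H \<longlongrightarrow> right_limit H x) (at_right x)"
proof -
  obtain m where "\<And>y. m \<le> H y"
    using assms(2) by (auto simp: bdd_below_def)
  then have "(H \<longlongrightarrow> Inf (H ` ({x<..} \<inter> UNIV))) (at x within {x<..} \<inter> UNIV)"
    using assms(1) by (intro Lim_right_bound) (auto simp: monoD)
  then show ?thesis
    unfolding right_limit_def by simp
qed

lemma mono_right_limit:
  assumes "bdd_below (range H)"
  shows "mono (right_limit H)"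
  unfolding right_limit_def mono_def
  using assms by (auto intro!: cInf_superset_mono intro: bdd_below_mono)

lemma right_limit_right_limit:
  assumes "bdd_below (range H)"
  shows "right_limit (right_limit H) x = right_limit H x"
proof (rule antisym)
  show "right_limit (right_limit H) x \<le> right_limit H x"
  proof (rule right_limit_greatest)
    fix z assume "x < z"
    then have "right_limit (right_limit H) x \<le> right_limit H ((x + z) / 2)"
      using bdd_below_range_right_limit[OF assms] by (intro right_limit_le) auto
    also have "\<dots> \<le> H z"
      using \<open>x < z\<close> assms by (intro right_limit_le) auto
    finally show "right_limit (right_limit H) x \<le> H z" .
  qed
  have "right_limit H x \<le> right_limit H y" if "x < y" for y
    using mono_right_limit[OF assms] that by (simp add: monoD)
  then show "right_limit H x \<le> right_limit (right_limit H) x"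
    by (rule right_limit_greatest)
qed

lemma continuous_at_right_right_limit:
  assumes "bdd_below (range H)"
  shows "continuous (at_right x) (right_limit H)"
  using tendsto_right_limit[OF mono_right_limit bdd_below_range_right_limit, OF assms assms]
  by (simp add: continuous_within right_limit_right_limit[OF assms])

lemma utility_mono: "utility u \<Longrightarrow> mono u"
  by (simp add: utility_def)

lemma utility_const: "utility (\<lambda>_. c)"
  unfolding utility_def by (simp add: mono_def)

lemma utility_borel_measurable: "utility u \<Longrightarrow> u \<in> borel_measurable borel"
  unfolding utility_def by (intro borel_measurable_continuous_onI) simp

lemma utility_sublevel_cases:
  assumes "utility u"
  obtains "{s. u s \<le> t} = {}" | "{s. u s \<le> t} = UNIV" | c where "{s. u s \<le> t} = {..c}" "u c = t"
proof -
  have mono: "mono u" and cont: "continuous_on UNIV u"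
    using assms unfolding utility_def by auto
  let ?S = "{s. u s \<le> t}"
  consider "?S = {}" | "?S = UNIV" | "?S \<noteq> {}" "?S \<noteq> UNIV"
    by blast
  then show thesis
  proof cases
    case 3
    from 3(2) obtain z where "t < u z"
      by (metis UNIV_eq_I mem_Collect_eq not_le)
    have "s \<le> z" if "s \<in> ?S" for s
    proof -
      have "u s < u z"
        using that \<open>t < u z\<close> by simp
      then show ?thesis
        by (rule mono_strict_invE[OF mono]) simp
    qed
    then have "?S \<subseteq> {..z}"
      by blast
    then have bdd: "bdd_above ?S"
      by (rule bdd_above_mono[OF bdd_above_Iic])
    have "closed ?S"
      using cont by (intro closed_Collect_le continuous_intros) (simp_all add: continuous_on_eq_continuous_within)
    define c where "c = Sup ?S"
    have "c \<in> ?S"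
      unfolding c_def using closed_contains_Sup[OF 3(1) bdd \<open>closed ?S\<close>] .
    have S: "?S = {..c}"
    proof (intro set_eqI iffI)
      show "s \<in> {..c}" if "s \<in> ?S" for s
        unfolding c_def using cSup_upper[OF that bdd] by simp
      show "s \<in> ?S" if "s \<in> {..c}" for s
        using monoD[OF mono, of s c] that \<open>c \<in> ?S\<close> by simp
    qed
    have "open {s. u s < t}"
      using cont by (intro open_Collect_less continuous_intros) (simp_all add: continuous_on_eq_continuous_within)
    moreover have "{s. u s < t} \<subseteq> {..c}"
      unfolding S[symmetric] by auto
    ultimately have "{s. u s < t} \<subseteq> interior {..c}"
      by (intro interior_maximal)
    then have "\<not> u c < t"
      by (auto simp: subset_iff)
    then have "u c = t"
      using \<open>c \<in> ?S\<close> by simp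
    then show thesis
      using S that(3) by blast
  qed (use that in auto)
qed

definition pushforward_cdf :: "(real \<Rightarrow> real) \<Rightarrow> (real \<Rightarrow> real) \<Rightarrow> real \<Rightarrow> real" where
  "pushforward_cdf u H t =
     (if {s. u s \<le> t} = {} then 0 else if {s. u s \<le> t} = UNIV then 1 else H (Sup {s. u s \<le> t}))"

lemma pushforward_cdf_empty: "{s. u s \<le> t} = {} \<Longrightarrow> pushforward_cdf u H t = 0"
  and pushforward_cdf_UNIV: "{s. u s \<le> t} = UNIV \<Longrightarrow> pushforward_cdf u H t = 1"
  and pushforward_cdf_atMost: "{s. u s \<le> t} = {..c} \<Longrightarrow> pushforward_cdf u H t = H c"
proof -
  have "{..c} \<noteq> UNIV"
    using gt_ex[of c] by auto
  then show "{s. u s \<le> t} = {..c} \<Longrightarrow> pushforward_cdf u H t = H c"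
    unfolding pushforward_cdf_def by auto
qed (simp_all add: pushforward_cdf_def)

lemma pushforward_cdf_nonneg: "(\<And>x. 0 \<le> H x) \<Longrightarrow> 0 \<le> pushforward_cdf u H t"
  by (simp add: pushforward_cdf_def)

lemma pushforward_cdf_comp:
  "d 0 = 0 \<Longrightarrow> d 1 = 1 \<Longrightarrow> d (pushforward_cdf u H t) = pushforward_cdf u (\<lambda>s. d (H s)) t"
  by (simp add: pushforward_cdf_def)

lemma pushforward_cdf_le:
  assumes "utility u" "mono H" "\<And>x. 0 \<le> H x" "t < u z"
  shows "pushforward_cdf u H t \<le> H z"
  using utility_sublevel_cases[OF assms(1), of t]
proof cases
  case 1
  then show ?thesis
    using assms(3) by (simp add: pushforward_cdf_empty)
next
  case 2
  then have "u z \<le> t"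
    by blast
  then show ?thesis
    using assms(4) by simp
next
  case (3 c)
  have "c < z"
    using utility_mono[OF assms(1)] assms(4) \<open>u c = t\<close> by (auto elim: mono_strict_invE)
  then show ?thesis
    using 3 assms(2) by (simp add: pushforward_cdf_atMost monoD)
qed

lemma pushforward_cdf_ge:
  assumes "utility u" "mono H" "\<And>x. H x \<le> 1" "u c < t"
  obtains z where "c < z" "H z \<le> pushforward_cdf u H t"
  using utility_sublevel_cases[OF assms(1), of t]
proof cases
  case 1
  moreover have "c \<in> {s. u s \<le> t}"
    using assms(4) by simp
  ultimately show ?thesis
    by simp
next
  case 2
  then show ?thesis
    using that[of "c + 1"] assms(3) by (simp add: pushforward_cdf_UNIV)
next
  case (3 c')
  have "c < c'"
    using utility_mono[OF assms(1)] assms(4) \<open>u c' = t\<close> by (auto elim: mono_strict_invE)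
  then show ?thesis
    using that[of c'] 3 by (simp add: pushforward_cdf_atMost)
qed

lemma bdd_below_pushforward_cdf: "(\<And>x. 0 \<le> H x) \<Longrightarrow> bdd_below (range (pushforward_cdf u H))"
  using pushforward_cdf_nonneg by (auto intro!: bdd_belowI2[where m = 0])

lemma right_limit_pushforward_cdf_le:
  assumes "utility u" "mono H" "\<And>x. 0 \<le> H x" "t < u z"
  shows "right_limit (pushforward_cdf u H) t \<le> H z"
proof -
  have "right_limit (pushforward_cdf u H) t \<le> pushforward_cdf u H ((t + u z) / 2)"
    using bdd_below_pushforward_cdf[of H u, OF assms(3)] assms(4) by (intro right_limit_le) auto
  also have "\<dots> \<le> H z"
    using assms by (intro pushforward_cdf_le) auto
  finally show ?thesis .
qed

lemma right_limit_pushforward_cdf: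
  assumes u: "utility u" and H: "mono H" "\<And>x. 0 \<le> H x" "\<And>x. H x \<le> 1" "\<And>x. x < a \<Longrightarrow> H x = 0"
  shows "right_limit (pushforward_cdf u H) t = pushforward_cdf u (right_limit H) t"
proof -
  note below = right_limit_pushforward_cdf_le[OF u H(1,2)]
  have bdd: "bdd_below (range H)"
    using H(2) by (auto intro!: bdd_belowI2[where m = 0])
  from utility_sublevel_cases[OF u, of t] show ?thesis
  proof cases
    case 1
    then have "t < u (a - 1)"
      by (metis empty_iff mem_Collect_eq not_le)
    then have "right_limit (pushforward_cdf u H) t \<le> 0"
      using below[of t "a - 1"] H(4)[of "a - 1"] by simp
    moreover have "0 \<le> right_limit (pushforward_cdf u H) t"
      using H(2) by (intro right_limit_greatest pushforward_cdf_nonneg)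
    ultimately show ?thesis
      using 1 by (simp add: pushforward_cdf_empty)
  next
    case 2
    then have "pushforward_cdf u H y = 1" if "t < y" for y
      using that by (intro pushforward_cdf_UNIV) (auto simp: set_eq_iff intro: order_trans)
    then have "right_limit (pushforward_cdf u H) t = 1"
      using right_limit_le[OF bdd_below_pushforward_cdf[of H u, OF H(2)], of t "t + 1"]
        right_limit_greatest[of t 1 "pushforward_cdf u H"]
      by simp
    then show ?thesis
      using 2 by (simp add: pushforward_cdf_UNIV)
  next
    case (3 c)
    have "right_limit (pushforward_cdf u H) t = right_limit H c"
    proof (rule antisym)
      show "right_limit (pushforward_cdf u H) t \<le> right_limit H c"
      proof (rule right_limit_greatest)
        fix z assume "c < z"
        then have "z \<notin> {s. u s \<le> t}"
          using 3(1) by simp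
        then have "t < u z"
          by simp
        then show "right_limit (pushforward_cdf u H) t \<le> H z"
          by (rule below)
      qed
      show "right_limit H c \<le> right_limit (pushforward_cdf u H) t"
      proof (rule right_limit_greatest)
        fix y assume "t < y"
        then obtain z where "c < z" "H z \<le> pushforward_cdf u H y"
          using pushforward_cdf_ge[OF u H(1,3)] 3(2) by blast
        then show "right_limit H c \<le> pushforward_cdf u H y"
          using right_limit_le[OF bdd] by (blast intro: order_trans)
      qed
    qed
    then show ?thesis
      using 3(1) by (simp add: pushforward_cdf_atMost)
  qed
qed

lemma right_limit_cdfM:
  assumes "\<And>x. 0 \<le> H x" "\<And>x. x < a \<Longrightarrow> H x = 0" "\<And>x. b \<le> x \<Longrightarrow> H x = 1"
  shows "right_limit H \<in> cdfM"
proof (rule cdfM_I)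
  have bdd: "bdd_below (range H)"
    using assms(1) by (auto intro!: bdd_belowI2[where m = 0])
  then show "mono (right_limit H)" "continuous (at_right x) (right_limit H)" for x
    by (rule mono_right_limit, rule continuous_at_right_right_limit)
  show "right_limit H x = 0" if "x < a" for x
    using right_limit_le[OF bdd, of x "(x + a) / 2"] right_limit_greatest[of x 0 H] that assms(1,2)
    by simp
  show "right_limit H x = 1" if "b \<le> x" for x
    using right_limit_le[OF bdd, of x "x + 1"] right_limit_greatest[of x 1 H] that assms(3)
    by simp
qed

lemma distortion_comp_cdfM:
  assumes "distortion d" "F \<in> cdfM"
  shows "mono (\<lambda>x. d (F x))" "0 \<le> d (F x)" "d (F x) \<le> 1"
proof -
  have F01: "F x \<in> {0..1}" for x
    using cdfM_nonneg[OF assms(2)] cdfM_le_1[OF assms(2)] by simp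
  show "mono (\<lambda>x. d (F x))"
    using assms(1) cdfM_mono[OF assms(2)] F01 by (auto simp: distortion_def mono_def mono_on_def)
  show "0 \<le> d (F x)" "d (F x) \<le> 1"
    using assms(1) F01[of x] unfolding distortion_def by (meson atLeastAtMost_iff image_subset_iff)+
qed

lemma prob_distortion_eq_right_limit:
  assumes "distortion d" "F \<in> cdfM"
  shows "prob_distortion d F = right_limit (\<lambda>x. d (F x))"
proof
  fix x
  have "bdd_below (range (\<lambda>x. d (F x)))"
    using distortion_comp_cdfM(2)[OF assms] by (auto intro!: bdd_belowI2[where m = 0])
  then have "((\<lambda>x. d (F x)) \<longlongrightarrow> right_limit (\<lambda>x. d (F x)) x) (at_right x)"
    using distortion_comp_cdfM(1)[OF assms] by (intro tendsto_right_limit)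
  then show "prob_distortion d F x = right_limit (\<lambda>x. d (F x)) x"
    unfolding prob_distortion_def by (intro tendsto_Lim) simp_all
qed

lemma prob_distortion_cdfM:
  assumes "distortion d" "F \<in> cdfM"
  shows "prob_distortion d F \<in> cdfM"
proof -
  obtain a b where ab: "\<And>x. x < a \<Longrightarrow> F x = 0" "\<And>x. b \<le> x \<Longrightarrow> F x = 1"
    using cdfM_support[OF assms(2)] by blast
  have "d 0 = 0" "d 1 = 1"
    using assms(1) by (simp_all add: distortion_def)
  then show ?thesis
    unfolding prob_distortion_eq_right_limit[OF assms]
    using distortion_comp_cdfM[OF assms] ab by (intro right_limit_cdfM[where a = a and b = b]) auto
qed

lemma utility_transform_eq_pushforward_cdf:
  assumes F: "F \<in> cdfM" and u: "utility u"
  shows "utility_transform u F = pushforward_cdf u F"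
proof
  fix t
  have mono: "\<And>x y. x \<le> y \<Longrightarrow> F x \<le> F y"
    using cdfM_mono[OF F] by (simp add: monoD)
  note lim = cdfM_right_continuous[OF F] cdfM_at_bot[OF F] cdfM_at_top[OF F]
  have "utility_transform u F t = measure (interval_measure F) {s. u s \<le> t}"
    unfolding utility_transform_def cdf_def using utility_borel_measurable[OF u]
    by (subst measure_distr) (auto simp: vimage_def)
  moreover have "measure (interval_measure F) UNIV = 1"
    using interval_measure_UNIV[OF mono lim] by (simp add: measure_def)
  moreover note measure_interval_measure_Iic[OF mono lim(1,2)]
  ultimately show "utility_transform u F t = pushforward_cdf u F t"
    by (cases rule: utility_sublevel_cases[OF u, of t])
      (simp_all add: pushforward_cdf_empty pushforward_cdf_UNIV pushforward_cdf_atMost)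
qed

lemma utility_transform_cdfM:
  assumes F: "F \<in> cdfM" and u: "utility u"
  shows "utility_transform u F \<in> cdfM"
proof -
  obtain a b where ab: "\<And>x. x < a \<Longrightarrow> F x = 0" "\<And>x. b \<le> x \<Longrightarrow> F x = 1"
    using cdfM_support[OF F] by blast
  have "real_distribution (interval_measure F)"
    using cdfM_mono[OF F] cdfM_right_continuous[OF F] cdfM_at_bot[OF F] cdfM_at_top[OF F]
    by (intro real_distribution_interval_measure) (auto simp: monoD)
  then have "prob_space (interval_measure F)"
    by (simp add: real_distribution_def)
  moreover have "u \<in> measurable (interval_measure F) borel"
    using utility_borel_measurable[OF u] by (simp add: measurable_def)
  ultimately interpret D: real_distribution "distr (interval_measure F) borel u"
    by (rule prob_space.real_distribution_distr)
  show ?thesis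
  proof (rule cdfM_I)
    show "mono (utility_transform u F)" "continuous (at_right x) (utility_transform u F)" for x
      unfolding utility_transform_def by (auto intro: monoI D.cdf_nondecreasing D.cdf_is_right_cont)
    show "utility_transform u F x = 0" if "x < u (a - 1)" for x
      using pushforward_cdf_le[OF u cdfM_mono[OF F] cdfM_nonneg[OF F] that]
        pushforward_cdf_nonneg[of F u x] cdfM_nonneg[OF F] ab(1)[of "a - 1"]
      by (simp add: utility_transform_eq_pushforward_cdf[OF F u])
    show "utility_transform u F x = 1" if "u b \<le> x" for x
      using utility_sublevel_cases[OF u, of x]
    proof cases
      case (3 c)
      then show ?thesis
        using that ab(2) by (auto simp: utility_transform_eq_pushforward_cdf[OF F u] pushforward_cdf_atMost)
    qed (use that in \<open>auto simp: utility_transform_eq_pushforward_cdf[OF F u] pushforward_cdf_UNIV\<close>)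
  qed
qed

lemma prob_distortion_utility_transform:
  assumes d: "distortion d" and F: "F \<in> cdfM" and u: "utility u"
  shows "prob_distortion d (utility_transform u F) = utility_transform u (prob_distortion d F)"
proof -
  obtain a where a: "\<And>x. x < a \<Longrightarrow> F x = 0"
    using cdfM_support[OF F] by blast
  have d01: "d 0 = 0" "d 1 = 1"
    using d by (simp_all add: distortion_def)
  have "prob_distortion d (utility_transform u F)
      = right_limit (\<lambda>t. d (pushforward_cdf u F t))"
    using d utility_transform_cdfM[OF F u]
    by (simp add: prob_distortion_eq_right_limit utility_transform_eq_pushforward_cdf[OF F u])
  also have "\<dots> = right_limit (pushforward_cdf u (\<lambda>x. d (F x)))"
    by (simp add: pushforward_cdf_comp d01)
  also have "\<dots> = pushforward_cdf u (right_limit (\<lambda>x. d (F x)))"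
    using distortion_comp_cdfM[OF d F] a d01
    by (intro ext right_limit_pushforward_cdf[OF u, where a = a]) auto
  also have "\<dots> = utility_transform u (prob_distortion d F)"
    using prob_distortion_cdfM[OF d F]
    by (simp add: prob_distortion_eq_right_limit[OF d F] utility_transform_eq_pushforward_cdf[OF _ u])
  finally show ?thesis .
qed

lemma utility_transform_const:
  assumes "F \<in> cdfM"
  shows "utility_transform (\<lambda>_. c) F = (\<lambda>t. if t < c then 0 else 1)"
proof
  fix t
  have "{s::real. c \<le> t} = (if t < c then {} else UNIV)"
    by auto
  then show "utility_transform (\<lambda>_. c) F t = (if t < c then 0 else 1)"
    by (simp add: utility_transform_eq_pushforward_cdf[OF assms utility_const]
        pushforward_cdf_empty pushforward_cdf_UNIV)
qed

lemma cdfM_comp_surj_utility: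
  assumes F: "F \<in> cdfM" and g: "utility g" "surj g"
  shows "F \<circ> g \<in> cdfM"
proof -
  obtain a b where ab: "\<And>x. x < a \<Longrightarrow> F x = 0" "\<And>x. b \<le> x \<Longrightarrow> F x = 1"
    using cdfM_support[OF F] by blast
  obtain sa sb where s: "g sa = a - 1" "g sb = b"
    using g(2) by (metis surjD)
  have mono: "mono g" and cont: "\<And>x. isCont g x"
    using g(1) by (auto simp: utility_def continuous_on_eq_continuous_within)
  show ?thesis
  proof (rule cdfM_I[where a = sa and b = sb])
    show "mono (F \<circ> g)"
      using mono cdfM_mono[OF F] by (simp add: mono_def)
    show "continuous (at_right x) (F \<circ> g)" for x
      using mono cont cdfM_right_continuous[OF F] by (rule continuous_at_right_comp_mono)
    show "(F \<circ> g) x = 0" if "x < sa" for x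
      using monoD[OF mono, of x sa] that s(1) ab(1) by simp
    show "(F \<circ> g) x = 1" if "sb \<le> x" for x
      using monoD[OF mono, of sb x] that s(2) ab(2) by simp
  qed
qed

lemma utility_transform_comp_surj_utility:
  assumes F: "F \<in> cdfM" and g: "utility g" "surj g"
  shows "utility_transform g (F \<circ> g) = F"
proof
  fix t
  obtain s s' where "g s = t" "g s' = t + 1"
    using g(2) by (metis surjD)
  then have "s \<in> {s. g s \<le> t}" "s' \<notin> {s. g s \<le> t}"
    by simp_all
  then show "utility_transform g (F \<circ> g) t = F t"
    unfolding utility_transform_eq_pushforward_cdf[OF cdfM_comp_surj_utility[OF assms] g(1)]
    by (cases rule: utility_sublevel_cases[OF g(1), of t]) (auto simp: pushforward_cdf_atMost)
qed

definition step_cdf :: "real \<Rightarrow> real \<Rightarrow> real \<Rightarrow> real" where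
  "step_cdf p q s = (if s < 0 then 0 else if s < 1 then p else if s < 2 then q else 1)"

lemma step_cdf_cdfM:
  assumes "0 \<le> p" "p \<le> q" "q \<le> 1"
  shows "step_cdf p q \<in> cdfM"
proof (rule cdfM_I[where a = 0 and b = 2])
  show "mono (step_cdf p q)"
    using assms by (auto simp: mono_def step_cdf_def)
  show "continuous (at_right x) (step_cdf p q)" for x
    unfolding step_cdf_def by (intro continuous_at_right_if_less continuous_const)
qed (simp_all add: step_cdf_def)

definition ramp :: "real \<Rightarrow> real \<Rightarrow> real" where
  "ramp y s = max 0 (min 1 (s - y))"

definition collapse :: "real \<Rightarrow> real \<Rightarrow> real" where
  "collapse y s = s - ramp y s"

lemma utility_ramp: "utility (ramp y)"
  and utility_collapse: "utility (collapse y)"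
  unfolding utility_def collapse_def ramp_def mono_def
  by (intro conjI allI impI continuous_intros; auto)+

lemma sublevel_ramp:
  "t < 0 \<Longrightarrow> {s. ramp y s \<le> t} = {}"
  "0 \<le> t \<Longrightarrow> t < 1 \<Longrightarrow> {s. ramp y s \<le> t} = {..y + t}"
  "1 \<le> t \<Longrightarrow> {s. ramp y s \<le> t} = UNIV"
  unfolding ramp_def by auto

lemma sublevel_collapse:
  "t < y \<Longrightarrow> {s. collapse y s \<le> t} = {..t}"
  "y \<le> t \<Longrightarrow> {s. collapse y s \<le> t} = {..t + 1}"
  unfolding collapse_def ramp_def by auto

lemma surj_collapse: "surj (collapse y)"
proof (rule surjI)
  fix t
  show "collapse y (if t < y then t else t + 1) = t"
    by (simp add: collapse_def ramp_def)
qed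

lemma utility_transform_ramp_collapse:
  assumes "F \<in> cdfM"
  shows "utility_transform (ramp y) (F \<circ> collapse y) = step_cdf (F y) 1"
proof
  fix t
  have "F \<circ> collapse y \<in> cdfM"
    using assms utility_collapse surj_collapse by (rule cdfM_comp_surj_utility)
  then have "utility_transform (ramp y) (F \<circ> collapse y) t = pushforward_cdf (ramp y) (F \<circ> collapse y) t"
    by (simp add: utility_transform_eq_pushforward_cdf utility_ramp)
  also have "\<dots> = step_cdf (F y) 1 t"
  proof -
    consider "t < 0" | "0 \<le> t" "t < 1" | "1 \<le> t"
      by linarith
    then show ?thesis
    proof cases
      case 2
      have "collapse y (y + t) = y"
        using 2 by (simp add: collapse_def ramp_def)
      then show ?thesis
        using 2 by (simp add: sublevel_ramp pushforward_cdf_atMost step_cdf_def)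
    qed (simp_all add: sublevel_ramp pushforward_cdf_empty pushforward_cdf_UNIV step_cdf_def)
  qed
  finally show "utility_transform (ramp y) (F \<circ> collapse y) t = step_cdf (F y) 1 t" .
qed

locale utility_commuting =
  fixes T :: "(real \<Rightarrow> real) \<Rightarrow> real \<Rightarrow> real"
  assumes cdfM_closed: "F \<in> cdfM \<Longrightarrow> T F \<in> cdfM"
    and commute: "utility u \<Longrightarrow> F \<in> cdfM \<Longrightarrow> T (utility_transform u F) = utility_transform u (T F)"
begin

lemma fixes_point_mass: "T (\<lambda>t. if t < c then 0 else 1) = (\<lambda>t. if t < c then 0 else 1)"
proof -
  have G: "step_cdf 0 1 \<in> cdfM"
    by (rule step_cdf_cdfM) simp_all
  show ?thesis
    using commute[OF utility_const G] cdfM_closed[OF G]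
    by (simp add: utility_transform_const G)
qed

definition induced_distortion :: "real \<Rightarrow> real" where
  "induced_distortion p = T (step_cdf p 1) 0"

lemma induced_distortion_between:
  assumes F: "F \<in> cdfM"
  shows "induced_distortion (F y) \<le> T F y" and "x < y \<Longrightarrow> T F x \<le> induced_distortion (F y)"
proof -
  let ?K = "F \<circ> collapse y"
  have K: "?K \<in> cdfM"
    using F utility_collapse surj_collapse by (rule cdfM_comp_surj_utility)
  have TK: "T ?K \<in> cdfM"
    using K by (rule cdfM_closed)
  have "induced_distortion (F y) = T (utility_transform (ramp y) ?K) 0"
    unfolding induced_distortion_def utility_transform_ramp_collapse[OF F] ..
  also have "\<dots> = T ?K y"
    using sublevel_ramp(2)[of 0 y]
    by (simp add: commute[OF utility_ramp K] utility_transform_eq_pushforward_cdf[OF TK utility_ramp]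
        pushforward_cdf_atMost)
  finally have d: "induced_distortion (F y) = T ?K y" .
  have "T F = T (utility_transform (collapse y) ?K)"
    using utility_transform_comp_surj_utility[OF F utility_collapse surj_collapse] by simp
  also have "\<dots> = pushforward_cdf (collapse y) (T ?K)"
    by (simp add: commute[OF utility_collapse K] utility_transform_eq_pushforward_cdf[OF TK utility_collapse])
  finally have TF: "T F = pushforward_cdf (collapse y) (T ?K)" .
  have mono: "mono (T ?K)"
    using TK by (rule cdfM_mono)
  show "induced_distortion (F y) \<le> T F y"
    using monoD[OF mono, of y "y + 1"] by (simp add: d TF sublevel_collapse pushforward_cdf_atMost)
  show "T F x \<le> induced_distortion (F y)" if "x < y"
    using monoD[OF mono, of x y] that by (simp add: d TF sublevel_collapse pushforward_cdf_atMost)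
qed

lemma distortion_induced_distortion: "distortion induced_distortion"
proof -
  have "0 \<le> induced_distortion p \<and> induced_distortion p \<le> 1" if "0 \<le> p" "p \<le> 1" for p
    using cdfM_closed[OF step_cdf_cdfM[of p 1]] that
    by (simp add: induced_distortion_def cdfM_nonneg cdfM_le_1)
  moreover have "induced_distortion p \<le> induced_distortion q" if "0 \<le> p" "p \<le> q" "q \<le> 1" for p q
    using induced_distortion_between(1)[OF step_cdf_cdfM[OF that], where y = 0]
      induced_distortion_between(2)[OF step_cdf_cdfM[OF that], where x = 0 and y = 1]
    by (simp add: step_cdf_def)
  moreover have "step_cdf 0 1 = (\<lambda>t. if t < 1 then 0 else 1)" "step_cdf 1 1 = (\<lambda>t. if t < 0 then 0 else 1)"
    by (auto simp: step_cdf_def)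
  ultimately show ?thesis
    unfolding distortion_def mono_on_def induced_distortion_def
    by (auto simp: fixes_point_mass)
qed

lemma eq_prob_distortion:
  assumes F: "F \<in> cdfM"
  shows "T F = prob_distortion induced_distortion F"
proof
  fix x
  have lim: "(T F \<longlongrightarrow> T F x) (at_right x)"
    using cdfM_right_continuous[OF cdfM_closed[OF F]] by (simp add: continuous_within)
  have "((\<lambda>y. induced_distortion (F y)) \<longlongrightarrow> T F x) (at_right x)"
  proof (rule tendsto_sandwich[OF _ _ tendsto_const lim])
    show "\<forall>\<^sub>F y in at_right x. T F x \<le> induced_distortion (F y)"
      using eventually_at_right_less[of x] by eventually_elim (rule induced_distortion_between(2)[OF F])
    show "\<forall>\<^sub>F y in at_right x. induced_distortion (F y) \<le> T F y"
      using induced_distortion_between(1)[OF F] by simp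
  qed
  then show "T F x = prob_distortion induced_distortion F x"
    unfolding prob_distortion_def by (intro tendsto_Lim[symmetric]) simp_all
qed

end

theorem theorem1:
  fixes T :: "(real \<Rightarrow> real) \<Rightarrow> (real \<Rightarrow> real)"
  assumes "\<forall>F\<in>cdfM. T F \<in> cdfM"
  shows "(\<forall>u. utility u \<longrightarrow>
            (\<forall>F\<in>cdfM. T (utility_transform u F) = utility_transform u (T F)))
         \<longleftrightarrow> (\<exists>d. distortion d \<and> (\<forall>F\<in>cdfM. T F = prob_distortion d F))"
proof
  assume "\<forall>u. utility u \<longrightarrow> (\<forall>F\<in>cdfM. T (utility_transform u F) = utility_transform u (T F))"
  with assms interpret utility_commuting T
    by unfold_locales simp_all
  show "\<exists>d. distortion d \<and> (\<forall>F\<in>cdfM. T F = prob_distortion d F)"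
    using distortion_induced_distortion eq_prob_distortion by (intro exI[of _ induced_distortion]) simp
next
  assume "\<exists>d. distortion d \<and> (\<forall>F\<in>cdfM. T F = prob_distortion d F)"
  then obtain d where d: "distortion d" and T: "\<And>F. F \<in> cdfM \<Longrightarrow> T F = prob_distortion d F"
    by blast
  show "\<forall>u. utility u \<longrightarrow> (\<forall>F\<in>cdfM. T (utility_transform u F) = utility_transform u (T F))"
  proof (intro allI impI ballI)
    fix u F assume u: "utility u" and F: "F \<in> cdfM"
    show "T (utility_transform u F) = utility_transform u (T F)"
      using prob_distortion_utility_transform[OF d F u]
      by (simp add: T F utility_transform_cdfM[OF F u])
  qed
qed

end
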